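(* Let $G$ be a bipartite cactus graph with $n\ge 4$ vertices, $m$ edges and $b$ bridges. Then $m\le 2\left\lfloor \frac{2(n-1-b)}{3}\right\rfloor + b$.
   Context: A cactus graph is a connected simple graph in which every edge belongs to at most one cycle; a bi-cactus is a cactus that is also bipartite. A bridge is an edge whose removal disconnects the graph. *)

theory Defs
  imports Main
begin

definition simple_graph :: "'a set \<Rightarrow> 'a set set \<Rightarrow> bool" where
  "simple_graph V E \<longleftrightarrow> finite V \<and> (\<forall>e\<in>E. \<exists>u v. e = {u, v} \<and> u \<in> V \<and> v \<in> V \<and> u \<noteq> v)"

definition adj_rel :: "'a set set \<Rightarrow> ('a \<times> 'a) set" where
  "adj_rel E = {(u, v). {u, v} \<in> E}"

definition connected_graph :: "'a set \<Rightarrow> 'a set set \<Rightarrow> bool" where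
  "connected_graph V E \<longleftrightarrow> V \<noteq> {} \<and> (\<forall>u\<in>V. \<forall>v\<in>V. (u, v) \<in> (adj_rel E)\<^sup>*)"

definition is_cycle :: "'a set set \<Rightarrow> 'a set set \<Rightarrow> bool" where
  "is_cycle E C \<longleftrightarrow> (\<exists>vs. length vs \<ge> 3 \<and> distinct vs \<and>
     (\<forall>i < length vs. {vs ! i, vs ! ((i + 1) mod length vs)} \<in> E) \<and>
     C = {{vs ! i, vs ! ((i + 1) mod length vs)} | i. i < length vs})"

definition cactus :: "'a set \<Rightarrow> 'a set set \<Rightarrow> bool" where
  "cactus V E \<longleftrightarrow> simple_graph V E \<and> connected_graph V E \<and>
     (\<forall>e\<in>E. \<forall>C1 C2. is_cycle E C1 \<longrightarrow> is_cycle E C2 \<longrightarrow> e \<in> C1 \<longrightarrow> e \<in> C2 \<longrightarrow> C1 = C2)"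

definition bipartite :: "'a set \<Rightarrow> 'a set set \<Rightarrow> bool" where
  "bipartite V E \<longleftrightarrow> (\<exists>f :: 'a \<Rightarrow> bool. \<forall>u\<in>V. \<forall>v\<in>V. {u, v} \<in> E \<longrightarrow> f u \<noteq> f v)"

definition is_bridge :: "'a set \<Rightarrow> 'a set set \<Rightarrow> 'a set \<Rightarrow> bool" where
  "is_bridge V E e \<longleftrightarrow> e \<in> E \<and> \<not> connected_graph V (E - {e})"

definition bridges :: "'a set \<Rightarrow> 'a set set \<Rightarrow> 'a set set" where
  "bridges V E = {e \<in> E. is_bridge V E e}"

end

(* Adding the edges of a graph one at a time, an edge either joins two components or
   closes a cycle that did not exist before; hence m + 1 \<le> n + c for a connected graph
   with c cycles. In a cactus the cycles are edge-disjoint and, together, consist exactly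
   of the non-bridge edges, so p = m - b counts the cycle edges; bipartiteness makes every
   cycle even, hence of length at least 4, so 4 c \<le> p with p even. Writing p = 2 q,
   this gives 3 q \<le> 2 (n - 1 - b), i.e. q \<le> \<lfloor>2 (n - 1 - b) / 3\<rfloor>, and m = 2 q + b. *)

theory Submission
  imports Defs
begin

lemma adj_rel_iff [simp]: "(x, y) \<in> adj_rel E \<longleftrightarrow> {x, y} \<in> E"
  by (simp add: adj_rel_def)

lemma sym_adj_rel: "sym (adj_rel E)"
  by (auto intro: symI simp: insert_commute)

lemma reachable_sym: "(x, y) \<in> (adj_rel E)\<^sup>* \<Longrightarrow> (y, x) \<in> (adj_rel E)\<^sup>*"
  by (rule symD[OF sym_rtrancl[OF sym_adj_rel]])

lemma reachable_mono: "F \<subseteq> E \<Longrightarrow> (adj_rel F)\<^sup>* \<subseteq> (adj_rel E)\<^sup>*"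
  by (rule rtrancl_mono) (auto simp: adj_rel_def)

lemma simple_graph_edge_subset: "simple_graph V E \<Longrightarrow> e \<in> E \<Longrightarrow> e \<subseteq> V"
  by (force simp: simple_graph_def)

lemma simple_graph_finite_edges: "simple_graph V E \<Longrightarrow> finite E"
  by (rule finite_subset[of _ "Pow V"]) (auto simp: simple_graph_def)

abbreviation walk :: "'a set set \<Rightarrow> 'a list \<Rightarrow> bool" where
  "walk E \<equiv> successively (\<lambda>x y. {x, y} \<in> E)"

lemma walk_reachable: "walk E ps \<Longrightarrow> ps \<noteq> [] \<Longrightarrow> (hd ps, last ps) \<in> (adj_rel E)\<^sup>*"
  by (induction ps rule: induct_list012) (auto intro: converse_rtrancl_into_rtrancl)

lemma reachable_distinct_walk:
  assumes "(x, y) \<in> (adj_rel E)\<^sup>*"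
  obtains ps where "walk E ps" "distinct ps" "ps \<noteq> []" "hd ps = x" "last ps = y"
  using assms
proof (induction arbitrary: thesis rule: converse_rtrancl_induct)
  case base
  show ?case
    using base[of "[y]"] by simp
next
  case (step x x')
  then obtain ps where ps: "walk E ps" "distinct ps" "ps \<noteq> []" "hd ps = x'" "last ps = y"
    by blast
  show ?case
  proof (cases "x \<in> set ps")
    case True
    then obtain as bs where "ps = as @ x # bs"
      by (meson split_list)
    then show ?thesis
      using ps step.prems[of "x # bs"] by (simp add: successively_append_iff)
  next
    case False
    then show ?thesis
      using ps step.hyps(1) step.prems[of "x # ps"] by (cases ps) auto
  qed
qed

definition cycle_edge :: "'a list \<Rightarrow> nat \<Rightarrow> 'a set" where
  "cycle_edge vs i = {vs ! i, vs ! (Suc i mod length vs)}"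

lemma cycle_edge_last: "vs \<noteq> [] \<Longrightarrow> cycle_edge vs (length vs - 1) = {last vs, hd vs}"
  by (simp add: cycle_edge_def last_conv_nth hd_conv_nth)

lemma cycle_edge_inj_on:
  assumes "distinct vs" "3 \<le> length vs"
  shows "inj_on (cycle_edge vs) {..<length vs}"
proof
  fix a j assume a: "a \<in> {..<length vs}" and j: "j \<in> {..<length vs}"
    and eq: "cycle_edge vs a = cycle_edge vs j"
  show "a = j"
  proof (rule ccontr)
    assume "a \<noteq> j"
    have "0 < length vs"
      using assms(2) by linarith
    then have "Suc a mod length vs < length vs" "Suc j mod length vs < length vs"
      by simp_all
    with \<open>a \<noteq> j\<close> eq a j assms(1) have "a = Suc j mod length vs \<and> j = Suc a mod length vs"
      by (auto simp: cycle_edge_def doubleton_eq_iff nth_eq_iff_index_eq)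
    moreover have "a < length vs" "j < length vs"
      using a j by simp_all
    \<comment> \<open>\<open>a \<equiv> j + 1\<close> and \<open>j \<equiv> a + 1\<close> modulo the length would force it to divide 2.\<close>
    ultimately show False
      using assms(2) \<open>a \<noteq> j\<close> by (metis Suc_n_not_le_n lessI mod_Suc mod_if not_add_less2 numeral_3_eq_3
          plus_1_eq_Suc)
  qed
qed

definition cycles :: "'a set set \<Rightarrow> 'a set set set" where
  "cycles E = {C. is_cycle E C}"

lemma is_cycleI:
  assumes "3 \<le> length vs" "distinct vs" "\<And>i. i < length vs \<Longrightarrow> cycle_edge vs i \<in> E"
  shows "is_cycle E (cycle_edge vs ` {..<length vs})"
  using assms unfolding is_cycle_def cycle_edge_def by auto

lemma is_cycleE:
  assumes "is_cycle E C"
  obtains vs where "3 \<le> length vs" "distinct vs" "\<And>i. i < length vs \<Longrightarrow> cycle_edge vs i \<in> E"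
    "C = cycle_edge vs ` {..<length vs}" "card C = length vs"
proof -
  obtain vs where vs: "3 \<le> length vs" "distinct vs" "\<And>i. i < length vs \<Longrightarrow> cycle_edge vs i \<in> E"
    "C = cycle_edge vs ` {..<length vs}"
    using assms unfolding is_cycle_def cycle_edge_def by auto
  moreover have "card C = length vs"
    using vs by (simp add: card_image cycle_edge_inj_on)
  ultimately show thesis
    using that by blast
qed

lemma card_cycle_ge_3: "is_cycle E C \<Longrightarrow> 3 \<le> card C"
  by (metis is_cycleE)

lemma cycle_subset_edges: "is_cycle E C \<Longrightarrow> C \<subseteq> E"
  by (auto elim: is_cycleE)

lemma cycles_mono: "F \<subseteq> E \<Longrightarrow> cycles F \<subseteq> cycles E"
  unfolding cycles_def is_cycle_def by blast

lemma finite_cycles: "finite E \<Longrightarrow> finite (cycles E)"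
  by (rule finite_subset[of _ "Pow E"]) (auto simp: cycles_def dest: cycle_subset_edges)

lemma cycle_through_new_edge:
  assumes "(v, u) \<in> (adj_rel E)\<^sup>*" "u \<noteq> v" "{u, v} \<notin> E"
  obtains C where "is_cycle (insert {u, v} E) C" "{u, v} \<in> C"
proof -
  obtain ps where ps: "walk E ps" "distinct ps" "ps \<noteq> []" "hd ps = v" "last ps = u"
    using assms(1) by (rule reachable_distinct_walk)
  have length_ps: "3 \<le> length ps"
  proof (rule ccontr)
    assume "\<not> 3 \<le> length ps"
    moreover have "length ps \<noteq> 0"
      using ps(3) by simp
    ultimately consider "length ps = 1" | "length ps = 2"
      by (cases "length ps = 1") auto
    then show False
    proof cases
      case 1
      then show False
        using ps assms(2) by (simp add: hd_conv_nth last_conv_nth)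
    next
      case 2
      then have "ps = [v, u]"
        using ps(4,5) by (cases ps rule: remdups_adj.cases) auto
      then show False
        using ps(1) assms(3) by (simp add: insert_commute)
    qed
  qed
  have "cycle_edge ps i \<in> insert {u, v} E" if "i < length ps" for i
  proof (cases "Suc i = length ps")
    case True
    then have "cycle_edge ps i = {last ps, hd ps}"
      using cycle_edge_last[OF ps(3)] by (metis diff_Suc_1)
    then show ?thesis
      using ps by (simp add: insert_commute)
  next
    case False
    with that have "cycle_edge ps i = {ps ! i, ps ! Suc i}"
      by (simp add: cycle_edge_def)
    then show ?thesis
      using successively_nth[OF ps(1)] that False by simp
  qed
  with length_ps ps(2) have "is_cycle (insert {u, v} E) (cycle_edge ps ` {..<length ps})"
    by (rule is_cycleI)
  moreover have "{u, v} \<in> cycle_edge ps ` {..<length ps}"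
    using cycle_edge_last[OF ps(3)] ps by (auto simp: insert_commute intro!: image_eqI)
  ultimately show thesis
    using that by blast
qed

lemma connected_remove_cycle_edge:
  assumes "connected_graph V E" "is_cycle E C" "e \<in> C"
  shows "connected_graph V (E - {e})"
proof -
  obtain vs where vs: "3 \<le> length vs" "distinct vs" "\<And>i. i < length vs \<Longrightarrow> cycle_edge vs i \<in> E"
    "C = cycle_edge vs ` {..<length vs}"
    using assms(2) by (meson is_cycleE)
  define L where "L = length vs"
  obtain j where j: "j < L" "e = cycle_edge vs j"
    using assms(3) vs(4) L_def by blast
  \<comment> \<open>Going round the cycle from the far end of \<open>e\<close> back to its near end avoids \<open>e\<close>.\<close>
  define ws where "ws = rotate (Suc j) vs"
  have ws_nth: "ws ! i = vs ! ((Suc j + i) mod L)" if "i < L" for i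
    using that unfolding ws_def L_def by (rule nth_rotate)
  have "walk (E - {e}) ws"
    unfolding successively_conv_nth
  proof (intro allI impI)
    fix i assume "Suc i < length ws"
    then have i: "Suc i < L"
      by (simp add: ws_def L_def)
    define k where "k = (Suc j + i) mod L"
    have "k < L"
      using j(1) by (simp add: k_def)
    moreover have "k \<noteq> j"
      unfolding k_def using i j(1) by (cases "Suc j + i < L") (auto simp: le_mod_geq)
    ultimately have "cycle_edge vs k \<noteq> e"
      using cycle_edge_inj_on[OF vs(2,1)] j L_def by (auto dest: inj_onD)
    moreover have "{ws ! i, ws ! Suc i} = cycle_edge vs k"
      using i ws_nth by (simp add: cycle_edge_def k_def L_def mod_Suc_eq)
    ultimately show "{ws ! i, ws ! Suc i} \<in> E - {e}"
      using vs(3) \<open>k < L\<close> L_def by simp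
  qed
  moreover have "ws \<noteq> []"
    using vs(1) by (auto simp: ws_def)
  moreover have "hd ws = vs ! (Suc j mod L)"
    using ws_nth[of 0] j(1) \<open>ws \<noteq> []\<close> by (simp add: hd_conv_nth)
  moreover have "last ws = vs ! j"
  proof -
    have "(Suc j + (L - 1)) mod L = j"
      using j(1) by simp
    then show ?thesis
      using ws_nth[of "L - 1"] j(1) \<open>ws \<noteq> []\<close> by (simp add: last_conv_nth ws_def L_def)
  qed
  ultimately have "(vs ! (Suc j mod L), vs ! j) \<in> (adj_rel (E - {e}))\<^sup>*"
    by (metis walk_reachable)
  then have "(x, y) \<in> (adj_rel (E - {e}))\<^sup>*" if "{x, y} = e" for x y
    using that j(2) reachable_sym by (auto simp: cycle_edge_def L_def doubleton_eq_iff)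
  then have "adj_rel E \<subseteq> (adj_rel (E - {e}))\<^sup>*"
    by (auto simp: adj_rel_def)
  then have "(adj_rel E)\<^sup>* \<subseteq> (adj_rel (E - {e}))\<^sup>*"
    by (rule rtrancl_subset_rtrancl)
  with assms(1) show ?thesis
    unfolding connected_graph_def by blast
qed

lemma bipartite_cycle_even:
  assumes "simple_graph V E" "bipartite V E" "is_cycle E C"
  shows "even (card C)"
proof -
  obtain vs where vs: "3 \<le> length vs" "\<And>i. i < length vs \<Longrightarrow> cycle_edge vs i \<in> E"
    "card C = length vs"
    using assms(3) by (meson is_cycleE)
  define L where "L = length vs"
  obtain col :: "'a \<Rightarrow> bool" where col: "\<And>x y. x \<in> V \<Longrightarrow> y \<in> V \<Longrightarrow> {x, y} \<in> E \<Longrightarrow> col x \<noteq> col y"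
    using assms(2) unfolding bipartite_def by blast
  have col_edge: "col (vs ! i) \<noteq> col (vs ! (Suc i mod L))" if "i < L" for i
    using vs(2)[OF that[unfolded L_def]] simple_graph_edge_subset[OF assms(1)]
    by (intro col) (auto simp: cycle_edge_def L_def)
  have alternate: "col (vs ! i) = (col (vs ! 0) = even i)" if "i < L" for i
    using that
  proof (induction i)
    case (Suc i)
    then show ?case
      using col_edge[of i] by auto
  qed simp
  have "L - 1 < L" "Suc (L - 1) = L"
    using vs(1) L_def by simp_all
  then have "col (vs ! (L - 1)) \<noteq> col (vs ! 0)"
    using col_edge[of "L - 1"] by simp
  then have "odd (L - 1)"
    using alternate[OF \<open>L - 1 < L\<close>] by auto
  then show ?thesis
    using vs(1,3) L_def by simp
qed

definition num_components :: "'a set \<Rightarrow> 'a set set \<Rightarrow> nat" where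
  "num_components V E = card ((\<lambda>x. (adj_rel E)\<^sup>* `` {x}) ` V)"

lemma reachable_Image_coarsen:
  assumes "F \<subseteq> E"
  shows "(adj_rel E)\<^sup>* `` ((adj_rel F)\<^sup>* `` {x}) = (adj_rel E)\<^sup>* `` {x}"
  using reachable_mono[OF assms] by (auto intro: rtrancl_trans)

lemma component_image_coarsen:
  "F \<subseteq> E \<Longrightarrow> (\<lambda>x. (adj_rel E)\<^sup>* `` {x}) ` V =
    (\<lambda>X. (adj_rel E)\<^sup>* `` X) ` (\<lambda>x. (adj_rel F)\<^sup>* `` {x}) ` V"
  by (simp add: image_image reachable_Image_coarsen)

lemma num_components_antimono:
  "finite V \<Longrightarrow> F \<subseteq> E \<Longrightarrow> num_components V E \<le> num_components V F"
  unfolding num_components_def component_image_coarsen[of F E] by (simp add: card_image_le)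

lemma num_components_strict_antimono:
  assumes "finite V" "F \<subseteq> E" "u \<in> V" "v \<in> V"
    and "(u, v) \<in> (adj_rel E)\<^sup>*" "(u, v) \<notin> (adj_rel F)\<^sup>*"
  shows "num_components V E < num_components V F"
proof -
  let ?classes = "(\<lambda>x. (adj_rel F)\<^sup>* `` {x}) ` V"
  let ?merge = "\<lambda>X. (adj_rel E)\<^sup>* `` X"
  have "(adj_rel F)\<^sup>* `` {u} \<noteq> (adj_rel F)\<^sup>* `` {v}"
    using assms(6) by blast
  moreover have "?merge ((adj_rel F)\<^sup>* `` {u}) = ?merge ((adj_rel F)\<^sup>* `` {v})"
    using assms(5) reachable_sym[OF assms(5)]
    by (auto simp: reachable_Image_coarsen[OF assms(2)] intro: rtrancl_trans)
  ultimately have "\<not> inj_on ?merge ?classes"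
    using assms(3,4) unfolding inj_on_def by blast
  then have "card (?merge ` ?classes) < card ?classes"
    using assms(1) by (simp add: card_image_le inj_on_iff_eq_card le_neq_implies_less)
  then show ?thesis
    unfolding num_components_def component_image_coarsen[OF assms(2)] .
qed

lemma card_edges_le_cycles:
  assumes "simple_graph V E"
  shows "card E + num_components V E \<le> card V + card (cycles E)"
  using simple_graph_finite_edges[OF assms] assms
proof (induction E rule: finite_induct)
  case empty
  have "num_components V {} = card ((\<lambda>x. {x}) ` V)"
    by (simp add: num_components_def adj_rel_def)
  also have "\<dots> = card V"
    by (simp add: card_image)
  finally show ?case
    by simp
next
  case (insert e F)
  have sg: "simple_graph V F"
    using insert.prems by (simp add: simple_graph_def)
  then have finite_V: "finite V"
    by (simp add: simple_graph_def)
  obtain u v where e: "e = {u, v}" "u \<in> V" "v \<in> V" "u \<noteq> v"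
    using insert.prems by (auto simp: simple_graph_def)
  have cycles_sub: "cycles F \<subseteq> cycles (insert e F)"
    by (rule cycles_mono) blast
  have finite_cycles_insert: "finite (cycles (insert e F))"
    using insert.hyps(1) by (simp add: finite_cycles)
  show ?case
  proof (cases "(v, u) \<in> (adj_rel F)\<^sup>*")
    case True
    then obtain C where C: "is_cycle (insert e F) C" "e \<in> C"
      using e insert.hyps(2) cycle_through_new_edge by metis
    then have "C \<in> cycles (insert e F) - cycles F"
      using insert.hyps(2) by (auto simp: cycles_def dest: cycle_subset_edges)
    then have "card (cycles F) < card (cycles (insert e F))"
      using cycles_sub finite_cycles_insert by (metis Diff_iff psubsetI psubset_card_mono)
    moreover have "num_components V (insert e F) \<le> num_components V F"
      using finite_V by (rule num_components_antimono) blast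
    ultimately show ?thesis
      using insert.IH[OF sg] insert.hyps by simp
  next
    case False
    have "(v, u) \<in> (adj_rel (insert e F))\<^sup>*"
      using e(1) by (auto simp: insert_commute)
    then have "num_components V (insert e F) < num_components V F"
      using False finite_V e(2,3) by (intro num_components_strict_antimono) auto
    moreover have "card (cycles F) \<le> card (cycles (insert e F))"
      using cycles_sub finite_cycles_insert by (rule card_mono[rotated])
    ultimately show ?thesis
      using insert.IH[OF sg] insert.hyps by simp
  qed
qed

lemma bridges_eq_edges_off_cycles:
  assumes "simple_graph V E" "connected_graph V E"
  shows "bridges V E = E - \<Union>(cycles E)"
proof (intro equalityI subsetI)
  fix e assume "e \<in> bridges V E"
  then have "e \<in> E" "\<not> connected_graph V (E - {e})"
    by (simp_all add: bridges_def is_bridge_def)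
  then show "e \<in> E - \<Union>(cycles E)"
    using assms(2) connected_remove_cycle_edge unfolding cycles_def by blast
next
  fix e assume "e \<in> E - \<Union>(cycles E)"
  then have e: "e \<in> E" "e \<notin> \<Union>(cycles E)"
    by simp_all
  then obtain u v where uv: "e = {u, v}" "u \<in> V" "v \<in> V" "u \<noteq> v"
    using assms(1) unfolding simple_graph_def by blast
  have "\<not> connected_graph V (E - {e})"
  proof
    assume "connected_graph V (E - {e})"
    then have "(v, u) \<in> (adj_rel (E - {e}))\<^sup>*"
      using uv(2,3) unfolding connected_graph_def by blast
    moreover note uv(4)
    moreover have "{u, v} \<notin> E - {e}"
      using uv(1) by simp
    ultimately obtain C where "is_cycle (insert {u, v} (E - {e})) C" "{u, v} \<in> C"
      by (rule cycle_through_new_edge)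
    moreover have "insert {u, v} (E - {e}) = E"
      using e(1) uv(1) by blast
    ultimately have "{u, v} \<in> \<Union>(cycles E)"
      unfolding cycles_def by auto
    with e(2) uv(1) show False
      by simp
  qed
  then show "e \<in> bridges V E"
    using e by (simp add: bridges_def is_bridge_def)
qed

lemma cactus_cycles_disjoint:
  assumes "cactus V E"
  shows "pairwise disjnt (cycles E)"
proof (rule pairwiseI)
  fix C1 C2 assume C: "C1 \<in> cycles E" "C2 \<in> cycles E" "C1 \<noteq> C2"
  have "e \<notin> C2" if "e \<in> C1" for e
  proof
    assume "e \<in> C2"
    moreover have "e \<in> E"
      using C(1) that by (auto simp: cycles_def dest: cycle_subset_edges)
    ultimately have "C1 = C2"
      using assms C(1,2) that unfolding cactus_def cycles_def by blast
    with C(3) show False ..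
  qed
  then show "disjnt C1 C2"
    by (auto simp: disjnt_def)
qed

lemma cactus_edge_bound_arith:
  fixes n m b c p :: int
  assumes "m + 1 \<le> n + c" "4 * c \<le> p" "even p" "b = m - p"
  shows "m \<le> 2 * ((2 * (n - 1 - b)) div 3) + b"
proof -
  obtain q where q: "p = 2 * q"
    using assms(3) by blast
  then have "3 * q \<le> 2 * (n - 1 - b)"
    using assms(1,2,4) by simp
  then have "q \<le> (2 * (n - 1 - b)) div 3"
    by linarith
  then show ?thesis
    using q assms(4) by linarith
qed

theorem lemma4p8:
  fixes V :: "'a set" and E :: "'a set set"
  assumes "cactus V E" and "bipartite V E" and "card V \<ge> 4"
  shows "int (card E) \<le> 2 * ((2 * (int (card V) - 1 - int (card (bridges V E)))) div 3)
                          + int (card (bridges V E))"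
proof -
  \<comment> \<open>The bound holds for every bipartite cactus.\<close>
  have sg: "simple_graph V E" and conn: "connected_graph V E"
    using assms(1) by (simp_all add: cactus_def)
  have finite_E: "finite E"
    using sg by (rule simple_graph_finite_edges)
  have "num_components V E \<noteq> 0"
    using sg conn by (simp add: num_components_def simple_graph_def connected_graph_def)
  then have rank: "card E + 1 \<le> card V + card (cycles E)"
    using card_edges_le_cycles[OF sg] by linarith
  define U where "U = \<Union>(cycles E)"
  have U_sub: "U \<subseteq> E"
    by (auto simp: U_def cycles_def dest: cycle_subset_edges)
  have card_U: "card U = (\<Sum>C\<in>cycles E. card C)"
    unfolding U_def using cactus_cycles_disjoint[OF assms(1)] finite_E
    by (intro card_Union_disjoint) (auto simp: cycles_def dest: cycle_subset_edges intro: finite_subset)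
  have cycle_card: "even (card C) \<and> 4 \<le> card C" if "C \<in> cycles E" for C
    using that bipartite_cycle_even[OF sg assms(2)] card_cycle_ge_3
    by (fastforce simp: cycles_def elim: oddE)
  then have "even (card U)"
    by (simp add: card_U dvd_sum)
  moreover have "4 * card (cycles E) \<le> card U"
    using sum_mono[of "cycles E" "\<lambda>_. 4" card] cycle_card by (simp add: card_U)
  moreover have "card (bridges V E) = card E - card U" "card U \<le> card E"
    using bridges_eq_edges_off_cycles[OF sg conn] U_sub finite_E
    by (simp_all add: U_def card_Diff_subset card_mono finite_subset)
  ultimately show ?thesis
    using rank
    by (intro cactus_edge_bound_arith[where c = "int (card (cycles E))" and p = "int (card U)"]) auto
qed

end
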